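(* Let $X$ be a real Hilbert space, $r>0$, and let $Z\subset X$ be an $r$-prox-regular set. Assume there exist $R\ge 3$ and $\rho\in\left(0,\frac{2r}{1+R^2}\right)$ such that for every $x\in Z$ there exists $\bar x\in Z$ with $|x-\bar x|<R\rho$ and $B_{3\rho}(\bar x)\subset Z$. Then for every $x\in\partial Z$ there exists a unit vector $\xi\in X$ such that $$\langle \xi, x-z\rangle+\frac{1}{2r}|x-z|^2\ge 0\quad\text{for all } z\in Z.$$
   Context: $X$ is a real Hilbert space with scalar product $\langle\cdot,\cdot\rangle$ and norm $|\cdot|$; $\mathrm{dist}(x,Z)=\inf\{|x-z|:z\in Z\}$; $B_\delta(x)=\{y\in X:|y-x|\le\delta\}$ is the closed ball; $\partial Z$ is the boundary of $Z$. A closed connected set $Z\subset X$ is called $r$-prox-regular ($r>0$) if for every $y\in X$ with $\mathrm{dist}(y,Z)=d\in(0,r)$ there exists $x\in Z$ such that $\mathrm{dist}\left(x+\frac{r}{d}(y-x),Z\right)=\frac{r}{d}|y-x|=r$. *)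

theory Defs
  imports "HOL-Analysis.Analysis"
begin

definition prox_regular :: "real \<Rightarrow> 'a::real_inner set \<Rightarrow> bool" where
  "prox_regular r Z \<longleftrightarrow> closed Z \<and> connected Z \<and>
     (\<forall>y. 0 < infdist y Z \<and> infdist y Z < r \<longrightarrow>
        (\<exists>x\<in>Z. infdist (x + (r / infdist y Z) *\<^sub>R (y - x)) Z = (r / infdist y Z) * norm (y - x)
              \<and> (r / infdist y Z) * norm (y - x) = r))"

end

theory Submission
  imports Defs
begin

text \<open>Projecting points outside Z that are close to a boundary point x onto Z, prox-regularity
provides points of Z arbitrarily close to x carrying unit proximal normals of radius r. Testing
such a normal against the ball of radius \<open>3\<rho>\<close> about \<open>x\<^sub>b\<close> shows that it makes a uniformly
positive angle with \<open>x - x\<^sub>b\<close>. Unit vectors in infinite dimensions need not have convergent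
subsequences, but the approximate normals at x form nested nonempty bounded closed convex sets,
whose intersection in a Hilbert space is nonempty; the angle bound keeps a common point q away
from 0. Finally q is a proximal normal of radius \<open>r |q|\<close>, and prox-regularity again upgrades
its normalisation to a proximal normal of radius r.\<close>

lemma power2_norm_add:
  fixes a b :: "'a::real_inner"
  shows "(norm (a + b))\<^sup>2 = (norm a)\<^sup>2 + 2 * inner a b + (norm b)\<^sup>2"
  by (simp add: dot_norm field_simps)

lemma convex_norm_diff_sq_le:
  fixes a b :: "'a::real_inner"
  assumes "convex K" "a \<in> K" "b \<in> K" "\<And>p. p \<in> K \<Longrightarrow> m \<le> (norm p)\<^sup>2"
  shows "(norm (a - b))\<^sup>2 \<le> 2 * (norm a)\<^sup>2 + 2 * (norm b)\<^sup>2 - 4 * m"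
proof -
  have "(1/2) *\<^sub>R (a + b) \<in> K" using convexD[OF assms(1-3), of "1/2" "1/2"] by (simp add: scaleR_add_right)
  then have "m \<le> (norm ((1/2) *\<^sub>R (a + b)))\<^sup>2" by (rule assms(4))
  then have "4 * m \<le> (norm (a + b))\<^sup>2" by (simp add: power_divide)
  moreover have "(norm (a - b))\<^sup>2 + (norm (a + b))\<^sup>2 = 2 * (norm a)\<^sup>2 + 2 * (norm b)\<^sup>2"
    using power2_norm_add[of a b] power2_norm_add[of a "- b"] by simp
  ultimately show ?thesis by linarith
qed

lemma Cauchy_if_dist_le_null:
  fixes s :: "nat \<Rightarrow> 'a::metric_space"
  assumes "\<And>n k. n \<le> k \<Longrightarrow> dist (s k) (s n) \<le> b n" "b \<longlonglongrightarrow> 0"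
  shows "Cauchy s"
  unfolding Cauchy_altdef2
proof (intro allI impI)
  fix e :: real assume "0 < e"
  then obtain N where "b N < e"
    using assms(2) by (metis LIMSEQ_D abs_less_iff diff_zero le_refl real_norm_def)
  then show "\<exists>N. \<forall>n\<ge>N. dist (s n) (s N) < e" using assms(1) by (meson le_less_trans)
qed

lemma decseq_closed_convex_Inter_nonempty:
  fixes K :: "nat \<Rightarrow> 'a::{real_inner,complete_space} set"
  assumes dec: "decseq K" and ne: "\<And>n. K n \<noteq> {}" and cv: "\<And>n. convex (K n)"
    and cl: "\<And>n. closed (K n)" and bd: "bounded (K 0)"
  shows "(\<Inter>n. K n) \<noteq> {}"
proof -
  \<comment> \<open>an almost minimal-norm sequence is Cauchy by the parallelogram law\<close>
  define m where "m n = (INF p\<in>K n. (norm p)\<^sup>2)" for n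
  have bdd: "bdd_below ((\<lambda>p. (norm p)\<^sup>2) ` K n)" for n by (auto intro: bdd_belowI[of _ 0])
  have m_le: "m n \<le> (norm p)\<^sup>2" if "p \<in> K n" for n p
    unfolding m_def using bdd that by (rule cINF_lower)
  have K_mono: "K k \<subseteq> K n" if "n \<le> k" for n k using dec that by (rule decseqD)
  have "incseq m"
    unfolding incseq_def m_def by (metis cINF_superset_mono[OF ne bdd K_mono] order_refl)
  obtain B where B: "\<forall>p\<in>K 0. norm p \<le> B" using bd bounded_iff by blast
  have "m n \<le> B\<^sup>2" for n
  proof -
    obtain p where "p \<in> K n" using ne by blast
    moreover have "K n \<subseteq> K 0" by (rule K_mono) simp
    ultimately show ?thesis using m_le[of p n] B power_mono[of "norm p" B 2] by force
  qed
  then obtain L where m_lim: "m \<longlonglongrightarrow> L" and m_L: "\<forall>n. m n \<le> L"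
    using incseq_convergent[OF \<open>incseq m\<close>] by blast
  have "\<exists>p\<in>K n. (norm p)\<^sup>2 < m n + 1 / Suc n" for n
    using cINF_less_iff[OF ne[of n] bdd[of n], of "m n + 1 / real (Suc n)"] unfolding m_def by simp
  then obtain s where s: "\<And>n. s n \<in> K n" "\<And>n. (norm (s n))\<^sup>2 < m n + 1 / Suc n" by metis
  have s_K: "s k \<in> K n" if "n \<le> k" for n k using K_mono s(1) that by blast
  define b where "b n = 2 * (L - m n) + 4 / Suc n" for n
  have "dist (s k) (s n) \<le> sqrt (b n)" if "n \<le> k" for n k
  proof -
    have "1 / real (Suc k) \<le> 1 / Suc n" using that by (simp add: frac_le)
    moreover have "(norm (s k - s n))\<^sup>2 \<le> 2 * (norm (s k))\<^sup>2 + 2 * (norm (s n))\<^sup>2 - 4 * m n"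
      by (rule convex_norm_diff_sq_le[OF cv s_K[OF that] s(1)]) (rule m_le)
    ultimately have "(dist (s k) (s n))\<^sup>2 \<le> b n"
      using s(2)[of n] s(2)[of k] m_L[rule_format, of k] unfolding b_def dist_norm by simp
    then show ?thesis by (simp add: real_le_rsqrt)
  qed
  moreover have "(\<lambda>n. sqrt (b n)) \<longlonglongrightarrow> 0"
  proof -
    have "(\<lambda>n. 4 / real (Suc n)) \<longlonglongrightarrow> 0" using LIMSEQ_Suc[OF lim_const_over_n[of "4::real"]] by simp
    then have "b \<longlonglongrightarrow> 2 * (L - L) + 0" unfolding b_def by (intro tendsto_intros m_lim)
    then show ?thesis using tendsto_real_sqrt by fastforce
  qed
  ultimately have "Cauchy s" by (rule Cauchy_if_dist_le_null)
  then obtain q where "s \<longlonglongrightarrow> q" using Cauchy_convergent_iff convergent_def by blast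
  have "q \<in> K n" for n
    using cl \<open>s \<longlonglongrightarrow> q\<close> s_K by (intro Lim_in_closed_set[of _ s]) (auto simp: eventually_sequentially)
  then show ?thesis by blast
qed

definition proximal_normal :: "real \<Rightarrow> 'a::real_inner set \<Rightarrow> 'a \<Rightarrow> 'a \<Rightarrow> bool" where
  "proximal_normal r Z x \<xi> \<longleftrightarrow> (\<forall>z\<in>Z. 0 \<le> 2 * r * inner \<xi> (x - z) + (norm (x - z))\<^sup>2)"

lemma proximal_normal_iff_inner_ge:
  assumes "0 < r"
  shows "proximal_normal r Z x \<xi> \<longleftrightarrow> (\<forall>z\<in>Z. inner \<xi> (x - z) + (1 / (2 * r)) * (norm (x - z))\<^sup>2 \<ge> 0)"
proof -
  have "inner \<xi> (x - z) + (1 / (2 * r)) * (norm (x - z))\<^sup>2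
      = (2 * r * inner \<xi> (x - z) + (norm (x - z))\<^sup>2) / (2 * r)" for z
    using assms by (simp add: field_simps)
  then show ?thesis using assms unfolding proximal_normal_def by (simp add: zero_le_divide_iff)
qed

lemma proximal_normal_iff_dist:
  assumes "0 \<le> r"
  shows "proximal_normal r Z x \<xi> \<longleftrightarrow> (\<forall>z\<in>Z. r * norm \<xi> \<le> dist (x + r *\<^sub>R \<xi>) z)"
proof -
  have "r * norm \<xi> \<le> dist (x + r *\<^sub>R \<xi>) z \<longleftrightarrow> 0 \<le> 2 * r * inner \<xi> (x - z) + (norm (x - z))\<^sup>2"
    for z
  proof -
    have "(dist (x + r *\<^sub>R \<xi>) z)\<^sup>2 = (norm (x - z))\<^sup>2 + 2 * r * inner \<xi> (x - z) + (r * norm \<xi>)\<^sup>2"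
      using power2_norm_add[of "x - z" "r *\<^sub>R \<xi>"] assms
      by (simp add: dist_norm algebra_simps inner_commute power_mult_distrib)
    moreover have "r * norm \<xi> \<le> dist (x + r *\<^sub>R \<xi>) z \<longleftrightarrow> (r * norm \<xi>)\<^sup>2 \<le> (dist (x + r *\<^sub>R \<xi>) z)\<^sup>2"
      using assms by (simp add: power_mono_iff)
    ultimately show ?thesis by linarith
  qed
  then show ?thesis unfolding proximal_normal_def by blast
qed

lemma proximal_normal_scaleR:
  "proximal_normal r Z x (t *\<^sub>R \<xi>) \<longleftrightarrow> proximal_normal (r * t) Z x \<xi>"
  by (simp add: proximal_normal_def mult.assoc)

lemma proximal_normal_mono:
  assumes "proximal_normal s Z x \<xi>" "0 \<le> t" "t \<le> s"
  shows "proximal_normal t Z x \<xi>"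
  unfolding proximal_normal_def
proof
  fix z assume "z \<in> Z"
  then have s_ineq: "0 \<le> 2 * s * inner \<xi> (x - z) + (norm (x - z))\<^sup>2"
    using assms(1) by (simp add: proximal_normal_def)
  show "0 \<le> 2 * t * inner \<xi> (x - z) + (norm (x - z))\<^sup>2"
  proof (cases "inner \<xi> (x - z) < 0")
    case True
    then have "2 * s * inner \<xi> (x - z) \<le> 2 * t * inner \<xi> (x - z)"
      using assms(3) by (simp add: mult_right_mono_neg)
    then show ?thesis using s_ineq by linarith
  next
    case False
    then show ?thesis using assms(2) by simp
  qed
qed

lemma infdist_proximal_normal:
  assumes "x \<in> Z" "0 \<le> T" "norm v = 1" "proximal_normal T Z x v"
  shows "infdist (x + T *\<^sub>R v) Z = T"
proof (rule antisym)
  show "infdist (x + T *\<^sub>R v) Z \<le> T"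
    using infdist_le[OF assms(1), of "x + T *\<^sub>R v"] assms(2,3) by (simp add: dist_norm)
  have "\<forall>z\<in>Z. T \<le> dist (x + T *\<^sub>R v) z"
    using assms proximal_normal_iff_dist[of T Z x v] by simp
  moreover have "Z \<noteq> {}" using assms(1) by blast
  ultimately show "T \<le> infdist (x + T *\<^sub>R v) Z"
    by (simp add: infdist_notempty cINF_greatest)
qed

lemma prox_regular_nearest_point:
  assumes "prox_regular r Z" "0 < infdist y Z" "infdist y Z < r"
  shows "\<exists>p\<in>Z. dist y p = infdist y Z \<and> proximal_normal r Z p ((1 / infdist y Z) *\<^sub>R (y - p))"
proof -
  define d where "d = infdist y Z"
  obtain p where "p \<in> Z" and far: "infdist (p + (r / d) *\<^sub>R (y - p)) Z = (r / d) * norm (y - p)"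
    and rad: "(r / d) * norm (y - p) = r"
    using assms unfolding prox_regular_def d_def by blast
  have "d > 0" "r > 0" using assms unfolding d_def by auto
  then have "dist y p = d" using rad by (simp add: dist_norm field_simps)
  then have "norm ((1 / d) *\<^sub>R (y - p)) = 1" using \<open>d > 0\<close> by (simp add: dist_norm)
  moreover have "r \<le> dist (p + r *\<^sub>R ((1 / d) *\<^sub>R (y - p))) z" if "z \<in> Z" for z
    using infdist_le[OF that, of "p + (r / d) *\<^sub>R (y - p)"] far rad by simp
  ultimately have "proximal_normal r Z p ((1 / d) *\<^sub>R (y - p))"
    using \<open>r > 0\<close> by (simp add: proximal_normal_iff_dist)
  with \<open>p \<in> Z\<close> \<open>dist y p = d\<close> show ?thesis unfolding d_def by blast
qed

lemma prox_regular_proximal_normal: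
  assumes "0 < r" "prox_regular r Z" "x \<in> Z" "0 < s" "norm v = 1" "proximal_normal s Z x v"
  shows "proximal_normal r Z x v"
proof -
  define T where "T = min s r / 2"
  have T: "0 < T" "T < r" "T \<le> s" using assms(1,4) unfolding T_def by auto
  define y where "y = x + T *\<^sub>R v"
  have "infdist y Z = T"
    unfolding y_def using assms(3,5) T proximal_normal_mono[OF assms(6)]
    by (intro infdist_proximal_normal) auto
  then obtain p where "p \<in> Z" "dist y p = T" and normal_p: "proximal_normal r Z p ((1 / T) *\<^sub>R (y - p))"
    using prox_regular_nearest_point[OF assms(2)] T by auto
  define w where "w = (1 / T) *\<^sub>R (y - p)"
  have y_p: "y - p = T *\<^sub>R w" and "norm w = 1"
    using T \<open>dist y p = T\<close> unfolding w_def by (auto simp: dist_norm)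
  define e where "e = p - x"
  \<comment> \<open>x and p are both nearest to y, which forces x = p because r > T\<close>
  have "y - x = e + T *\<^sub>R w" unfolding e_def y_p[symmetric] by simp
  moreover have "norm (y - x) = T" using T assms(5) by (simp add: y_def)
  ultimately have "T\<^sup>2 = (norm (e + T *\<^sub>R w))\<^sup>2" by simp
  also have "\<dots> = (norm e)\<^sup>2 + 2 * T * inner e w + T\<^sup>2"
    using \<open>norm w = 1\<close> T by (simp add: power2_norm_add power_mult_distrib)
  finally have inner_e: "2 * T * inner w e = - (norm e)\<^sup>2" by (simp add: inner_commute)
  have "0 \<le> 2 * r * inner w e + (norm e)\<^sup>2"
    using normal_p assms(3) unfolding proximal_normal_def w_def[symmetric] e_def by blast
  then have "0 \<le> T * (2 * r * inner w e + (norm e)\<^sup>2)" using T by simp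
  also have "\<dots> = r * (2 * T * inner w e) + T * (norm e)\<^sup>2" by (simp add: algebra_simps)
  also have "\<dots> = (T - r) * (norm e)\<^sup>2" unfolding inner_e by (simp add: algebra_simps)
  finally have "e = 0" using T by (simp add: zero_le_mult_iff)
  then have "p = x" "w = v" using T unfolding e_def w_def y_def by auto
  with normal_p show ?thesis unfolding w_def[symmetric] by simp
qed

lemma prox_regular_frontier_proximal_normal_nearby:
  assumes "0 < r" "prox_regular r Z" "x \<in> frontier Z" "0 < \<delta>"
  shows "\<exists>p\<in>Z. \<exists>\<xi>. norm \<xi> = 1 \<and> dist p x \<le> \<delta> \<and> proximal_normal r Z p \<xi>"
proof -
  have "closed Z" using assms(2) by (simp add: prox_regular_def)
  then have "x \<in> Z" "x \<notin> interior Z" using assms(3) by (auto simp: frontier_def)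
  define e where "e = min (\<delta> / 2) r"
  have "e > 0" using assms(1,4) unfolding e_def by simp
  then obtain y where y: "dist y x < e" "y \<notin> Z"
    using \<open>x \<notin> interior Z\<close> unfolding mem_interior subset_eq by (metis mem_ball dist_commute)
  define d where "d = infdist y Z"
  have "0 < d" unfolding d_def using infdist_pos_not_in_closed[OF \<open>closed Z\<close> _ y(2)] \<open>x \<in> Z\<close> by auto
  have "d \<le> dist y x" unfolding d_def using \<open>x \<in> Z\<close> by (rule infdist_le)
  then have "d < r" using y(1) unfolding e_def by simp
  then obtain p where "p \<in> Z" "dist y p = d" and normal: "proximal_normal r Z p ((1 / d) *\<^sub>R (y - p))"
    using prox_regular_nearest_point[OF assms(2)] \<open>0 < d\<close> unfolding d_def by blast
  have "norm ((1 / d) *\<^sub>R (y - p)) = 1" using \<open>dist y p = d\<close> \<open>0 < d\<close> by (simp add: dist_norm)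
  moreover have "dist p x \<le> \<delta>"
    using dist_triangle[of p x y] \<open>dist y p = d\<close> \<open>d \<le> dist y x\<close> y(1)
    unfolding e_def by (simp add: dist_commute)
  ultimately show ?thesis using \<open>p \<in> Z\<close> normal by blast
qed

text \<open>The error weight \<open>2r + 1 + 2|x - z|\<close> is what moving the base point of a proximal normal
  by \<open>\<eta>\<close> costs (\<open>proximal_normal_nearby_approx_normals\<close>).\<close>

definition approx_normals :: "real \<Rightarrow> 'a::real_inner set \<Rightarrow> 'a \<Rightarrow> real \<Rightarrow> 'a set" where
  "approx_normals r Z x \<eta> = {\<xi> \<in> cball 0 1. \<forall>z\<in>Z.
     - \<eta> * (2 * r + 1 + 2 * norm (x - z)) \<le> 2 * r * inner \<xi> (x - z) + (norm (x - z))\<^sup>2}"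

lemma approx_normals_halfspaces:
  "approx_normals r Z x \<eta> = cball 0 1 \<inter> (\<Inter>z\<in>Z. {\<xi>. inner ((2 * r) *\<^sub>R (x - z)) \<xi> \<ge>
     - \<eta> * (2 * r + 1 + 2 * norm (x - z)) - (norm (x - z))\<^sup>2})"
proof -
  have halfspace: "{\<xi>. b \<le> k * inner \<xi> a + t} = {\<xi>. inner (k *\<^sub>R a) \<xi> \<ge> b - t}"
    for a :: 'a and b k t :: real
    by (auto simp: inner_commute)
  have "approx_normals r Z x \<eta> = cball 0 1 \<inter> (\<Inter>z\<in>Z. {\<xi>.
      - \<eta> * (2 * r + 1 + 2 * norm (x - z)) \<le> 2 * r * inner \<xi> (x - z) + (norm (x - z))\<^sup>2})"
    unfolding approx_normals_def by auto
  then show ?thesis unfolding halfspace .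
qed

lemma convex_approx_normals: "convex (approx_normals r Z x \<eta>)"
  unfolding approx_normals_halfspaces by (intro convex_Int convex_INT convex_cball convex_halfspace_ge)

lemma closed_approx_normals: "closed (approx_normals r Z x \<eta>)"
  unfolding approx_normals_halfspaces by (intro closed_Int closed_INT ballI closed_cball closed_halfspace_ge)

lemma approx_normals_mono:
  assumes "0 \<le> r" "\<eta> \<le> \<eta>'"
  shows "approx_normals r Z x \<eta> \<subseteq> approx_normals r Z x \<eta>'"
proof -
  have "- \<eta>' * (2 * r + 1 + 2 * norm (x - z)) \<le> - \<eta> * (2 * r + 1 + 2 * norm (x - z))" for z
    using assms by (simp add: mult_right_mono)
  then show ?thesis unfolding approx_normals_def by (blast intro: order_trans)
qed

lemma proximal_normal_if_approx_normals:
  assumes "\<And>n. \<xi> \<in> approx_normals r Z x (1 / Suc n)"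
  shows "proximal_normal r Z x \<xi>"
  unfolding proximal_normal_def
proof
  fix z assume "z \<in> Z"
  define e where "e = 2 * r + 1 + 2 * norm (x - z)"
  have "(\<lambda>n. - (1 / real (Suc n)) * e) \<longlonglongrightarrow> - 0 * e"
    by (intro tendsto_intros LIMSEQ_Suc[OF lim_const_over_n])
  moreover have "- (1 / Suc n) * e \<le> 2 * r * inner \<xi> (x - z) + (norm (x - z))\<^sup>2" for n
    using assms[of n] \<open>z \<in> Z\<close> unfolding approx_normals_def e_def by blast
  ultimately show "0 \<le> 2 * r * inner \<xi> (x - z) + (norm (x - z))\<^sup>2"
    by (intro LIMSEQ_le_const2) auto
qed

lemma proximal_normal_nearby_approx_normals:
  assumes "proximal_normal r Z p \<xi>" "norm \<xi> \<le> 1" "0 \<le> r" "dist p x \<le> \<eta>" "\<eta> \<le> 1"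
  shows "\<xi> \<in> approx_normals r Z x \<eta>"
proof -
  have "0 \<le> \<eta>" using assms(4) zero_le_dist order_trans by blast
  have "- \<eta> * (2 * r + 1 + 2 * t) \<le> 2 * r * inner \<xi> (x - z) + t\<^sup>2"
    if "z \<in> Z" and t: "t = norm (x - z)" for z t
  proof -
    have "inner \<xi> (p - x) \<le> norm \<xi> * norm (p - x)" by (rule norm_cauchy_schwarz)
    also have "\<dots> \<le> 1 * \<eta>" using assms(2,4) \<open>0 \<le> \<eta>\<close> by (intro mult_mono) (auto simp: dist_norm)
    finally have "inner \<xi> (p - z) \<le> inner \<xi> (x - z) + \<eta>" by (simp add: inner_diff_right)
    then have inner_le: "2 * r * inner \<xi> (p - z) \<le> 2 * r * inner \<xi> (x - z) + 2 * r * \<eta>"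
      using assms(3) by (metis distrib_left mult_left_mono mult_nonneg_nonneg zero_le_numeral)
    have "norm (p - z) \<le> t + \<eta>"
      using norm_triangle_ineq[of "p - x" "x - z"] assms(4) t by (simp add: dist_norm)
    then have "(norm (p - z))\<^sup>2 \<le> (t + \<eta>)\<^sup>2" by (simp add: power_mono)
    also have "\<dots> = t\<^sup>2 + 2 * \<eta> * t + \<eta> * \<eta>" by (simp add: power2_eq_square algebra_simps)
    also have "\<dots> \<le> t\<^sup>2 + 2 * \<eta> * t + \<eta>" using assms(5) \<open>0 \<le> \<eta>\<close> by (simp add: mult_left_le)
    finally have "(norm (p - z))\<^sup>2 \<le> t\<^sup>2 + 2 * \<eta> * t + \<eta>" .
    moreover have "0 \<le> 2 * r * inner \<xi> (p - z) + (norm (p - z))\<^sup>2"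
      using assms(1) \<open>z \<in> Z\<close> by (simp add: proximal_normal_def)
    moreover have "- \<eta> * (2 * r + 1 + 2 * t) = - (2 * r * \<eta>) - 2 * \<eta> * t - \<eta>"
      by (simp add: algebra_simps)
    ultimately show ?thesis using inner_le by linarith
  qed
  then show ?thesis using assms(2) unfolding approx_normals_def by simp
qed

lemma proximal_normal_inner_ge:
  assumes "proximal_normal r Z p \<xi>" "norm \<xi> = 1" "cball c \<epsilon> \<subseteq> Z" "0 \<le> \<epsilon>"
  shows "2 * r * \<epsilon> - \<epsilon>\<^sup>2 - (norm (p - c))\<^sup>2 \<le> 2 * (r - \<epsilon>) * inner \<xi> (p - c)"
proof -
  define a where "a = inner \<xi> (p - c)"
  \<comment> \<open>test the normal against the point of the ball farthest in direction \<xi>\<close>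
  define z where "z = c + \<epsilon> *\<^sub>R \<xi>"
  have "z \<in> Z" using assms(2-4) by (auto simp: z_def dist_norm)
  have p_z: "p - z = (p - c) + (- \<epsilon>) *\<^sub>R \<xi>" by (simp add: z_def)
  have "inner \<xi> \<xi> = 1" using assms(2) power2_norm_eq_inner[of \<xi>] by simp
  then have "inner \<xi> (p - z) = a - \<epsilon>" by (simp add: z_def a_def inner_diff_right inner_add_right)
  moreover have "(norm (p - z))\<^sup>2 = (norm (p - c))\<^sup>2 - 2 * \<epsilon> * a + \<epsilon>\<^sup>2"
    using assms(2) unfolding p_z power2_norm_add by (simp add: a_def inner_commute power_mult_distrib)
  moreover have "0 \<le> 2 * r * inner \<xi> (p - z) + (norm (p - z))\<^sup>2"
    using assms(1) \<open>z \<in> Z\<close> by (simp add: proximal_normal_def)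
  ultimately have "0 \<le> 2 * r * (a - \<epsilon>) + ((norm (p - c))\<^sup>2 - 2 * \<epsilon> * a + \<epsilon>\<^sup>2)"
    by (simp only:)
  then show ?thesis unfolding a_def[symmetric] by (simp add: algebra_simps)
qed

lemma prox_regular_frontier_approx_normal:
  assumes r: "0 < r" and pr: "prox_regular r Z" and x: "x \<in> frontier Z" and \<eta>: "0 < \<eta>" "\<eta> \<le> 1"
    and ball: "cball c \<epsilon> \<subseteq> Z" "0 \<le> \<epsilon>" "\<epsilon> < r"
    and D: "norm (x - c) < D" "D\<^sup>2 < 2 * r * \<epsilon> - \<epsilon>\<^sup>2"
  shows "\<exists>\<xi>\<in>approx_normals r Z x \<eta>. (2 * r * \<epsilon> - \<epsilon>\<^sup>2 - D\<^sup>2) / (4 * (r - \<epsilon>)) \<le> inner (x - c) \<xi>"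
proof -
  define \<kappa> where "\<kappa> = (2 * r * \<epsilon> - \<epsilon>\<^sup>2 - D\<^sup>2) / (2 * (r - \<epsilon>))"
  have "0 < \<kappa>" using D(2) ball(3) unfolding \<kappa>_def by simp
  define \<delta> where "\<delta> = min \<eta> (min (\<kappa> / 2) (D - norm (x - c)))"
  have "0 < \<delta>" using \<eta> \<open>0 < \<kappa>\<close> D(1) unfolding \<delta>_def by simp
  have "\<delta> \<le> \<eta>" "\<delta> \<le> 1" using \<eta> unfolding \<delta>_def by auto
  obtain p \<xi> where "norm \<xi> = 1" "dist p x \<le> \<delta>" and normal: "proximal_normal r Z p \<xi>"
    using prox_regular_frontier_proximal_normal_nearby[OF r pr x \<open>0 < \<delta>\<close>] by blast
  have "norm (p - c) \<le> D"
    using norm_triangle_ineq[of "p - x" "x - c"] \<open>dist p x \<le> \<delta>\<close> unfolding \<delta>_def dist_norm by simp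
  then have "(norm (p - c))\<^sup>2 \<le> D\<^sup>2" by (simp add: power_mono)
  then have "2 * (r - \<epsilon>) * \<kappa> \<le> 2 * (r - \<epsilon>) * inner \<xi> (p - c)"
    using proximal_normal_inner_ge[OF normal \<open>norm \<xi> = 1\<close> ball(1,2)] ball(3) unfolding \<kappa>_def by simp
  then have "\<kappa> \<le> inner \<xi> (p - c)" using ball(3) by simp
  moreover have "inner \<xi> (p - x) \<le> \<delta>"
    using norm_cauchy_schwarz[of \<xi> "p - x"] \<open>norm \<xi> = 1\<close> \<open>dist p x \<le> \<delta>\<close> by (simp add: dist_norm)
  ultimately have "\<kappa> / 2 \<le> inner (x - c) \<xi>" unfolding \<delta>_def by (simp add: inner_diff_right inner_commute)
  moreover have "\<xi> \<in> approx_normals r Z x \<delta>"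
    using r \<open>norm \<xi> = 1\<close> \<open>dist p x \<le> \<delta>\<close> \<open>\<delta> \<le> 1\<close>
    by (intro proximal_normal_nearby_approx_normals[OF normal]) auto
  moreover have "approx_normals r Z x \<delta> \<subseteq> approx_normals r Z x \<eta>"
    using r \<open>\<delta> \<le> \<eta>\<close> by (intro approx_normals_mono) auto
  ultimately show ?thesis unfolding \<kappa>_def by auto
qed

lemma prox_regular_frontier_unit_proximal_normal:
  fixes Z :: "'a::{real_inner,complete_space} set"
  assumes r: "0 < r" and pr: "prox_regular r Z" and x: "x \<in> frontier Z"
    and ball: "cball c \<epsilon> \<subseteq> Z" "0 \<le> \<epsilon>" "\<epsilon> < r"
    and D: "norm (x - c) < D" "D\<^sup>2 < 2 * r * \<epsilon> - \<epsilon>\<^sup>2"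
  shows "\<exists>\<xi>. norm \<xi> = 1 \<and> proximal_normal r Z x \<xi>"
proof -
  have "x \<in> Z" using pr x by (auto simp: prox_regular_def frontier_def)
  define \<kappa> where "\<kappa> = (2 * r * \<epsilon> - \<epsilon>\<^sup>2 - D\<^sup>2) / (4 * (r - \<epsilon>))"
  have "0 < \<kappa>" using D(2) ball(3) unfolding \<kappa>_def by simp
  define K where "K n = approx_normals r Z x (1 / Suc n) \<inter> {\<xi>. inner (x - c) \<xi> \<ge> \<kappa>}" for n
  have "K n \<noteq> {}" for n
    using prox_regular_frontier_approx_normal[OF r pr x _ _ ball D, of "1 / Suc n"]
    unfolding K_def \<kappa>_def by auto
  moreover have "decseq K"
    unfolding K_def using r by (intro decseq_SucI Int_mono approx_normals_mono order_refl) (auto simp: frac_le)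
  moreover have "convex (K n)" "closed (K n)" for n
    unfolding K_def by (intro convex_Int convex_approx_normals convex_halfspace_ge
        closed_Int closed_approx_normals closed_halfspace_ge)+
  moreover have "bounded (K 0)"
    unfolding K_def approx_normals_def by (rule bounded_subset[OF bounded_cball[of 0 1]]) auto
  ultimately have "(\<Inter>n. K n) \<noteq> {}" by (intro decseq_closed_convex_Inter_nonempty)
  then obtain q where q: "\<And>n. q \<in> K n" by blast
  then have "q \<noteq> 0" using \<open>0 < \<kappa>\<close> unfolding K_def by fastforce
  have "proximal_normal r Z x q"
    using q unfolding K_def by (blast intro: proximal_normal_if_approx_normals)
  moreover have "q = norm q *\<^sub>R sgn q" using \<open>q \<noteq> 0\<close> by (simp add: sgn_div_norm)
  ultimately have "proximal_normal (r * norm q) Z x (sgn q)" by (metis proximal_normal_scaleR)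
  moreover have "0 < r * norm q" "norm (sgn q) = 1" using r \<open>q \<noteq> 0\<close> by (auto simp: norm_sgn)
  ultimately have "proximal_normal r Z x (sgn q)"
    using prox_regular_proximal_normal[OF r pr \<open>x \<in> Z\<close>] by blast
  then show ?thesis using \<open>norm (sgn q) = 1\<close> by blast
qed

theorem lemma1p5:
  fixes Z :: "'a::{real_inner, complete_space} set" and r R \<rho> :: real
  assumes "r > 0"
    and "prox_regular r Z"
    and "R \<ge> 3"
    and "\<rho> > 0" and "\<rho> < 2 * r / (1 + R\<^sup>2)"
    and "\<forall>x\<in>Z. \<exists>xb\<in>Z. norm (x - xb) < R * \<rho> \<and> cball xb (3 * \<rho>) \<subseteq> Z"
  shows "\<forall>x\<in>frontier Z. \<exists>\<xi>. norm \<xi> = 1 \<and>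
           (\<forall>z\<in>Z. inner \<xi> (x - z) + (1 / (2 * r)) * (norm (x - z))\<^sup>2 \<ge> 0)"
proof
  fix x assume x: "x \<in> frontier Z"
  then have "x \<in> Z" using assms(2) by (auto simp: prox_regular_def frontier_def)
  then obtain xb where xb: "norm (x - xb) < R * \<rho>" "cball xb (3 * \<rho>) \<subseteq> Z"
    using assms(6) by blast
  have "0 < 1 + R\<^sup>2" by (simp add: add_pos_nonneg)
  then have "\<rho> * (1 + R\<^sup>2) < 2 * r" using assms(5) by (simp add: pos_less_divide_eq)
  moreover have "\<rho> * 10 \<le> \<rho> * (1 + R\<^sup>2)" "\<rho> * (R\<^sup>2 + 9) \<le> 3 * (\<rho> * (1 + R\<^sup>2))"
    using assms(3,4) power_mono[of 3 R 2] by (simp_all add: algebra_simps)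
  ultimately have "3 * \<rho> < r" "\<rho> * (R\<^sup>2 + 9) < 6 * r" using assms(4) by linarith+
  then have "3 * \<rho> < r" "0 < \<rho> * (6 * r - \<rho> * (R\<^sup>2 + 9))" using assms(4) by simp_all
  then have "3 * \<rho> < r" "(R * \<rho>)\<^sup>2 < 2 * r * (3 * \<rho>) - (3 * \<rho>)\<^sup>2"
    by (simp_all add: algebra_simps power2_eq_square)
  then show "\<exists>\<xi>. norm \<xi> = 1 \<and> (\<forall>z\<in>Z. inner \<xi> (x - z) + (1 / (2 * r)) * (norm (x - z))\<^sup>2 \<ge> 0)"
    using prox_regular_frontier_unit_proximal_normal[OF assms(1,2) x xb(2) _ _ xb(1)] assms(4)
    by (auto simp: proximal_normal_iff_inner_ge[OF assms(1)])
qed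

end
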